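(* Let $G_0$ be a finite nonabelian simple group, identified with its inner automorphism group in $\mathrm{Aut}(G_0)$. Suppose that $\mathrm{Reg}_H(H\cdot G_0,5)\ge 5$ for every maximal solvable subgroup $H$ of $\mathrm{Aut}(G_0)$. Then for every $G$ with $G_0\le G\le\mathrm{Aut}(G_0)$ and every solvable subgroup $S$ of $G$, we have $\mathrm{Reg}_S(G,5)\ge 5$.
   Context: For a finite group $G$ and subgroup $H$, $G$ acts by right multiplication on the set $\Omega_H$ of right cosets of $H$, with kernel $H_G=\bigcap_{g\in G}H^g$; $\mathrm{Reg}_H(G,k)$ is the number of regular (free) orbits of $G/H_G$ on $\Omega_H^k$ under the componentwise action $(\alpha_1,\dots,\alpha_k)g=(\alpha_1g,\dots,\alpha_kg)$. A maximal solvable subgroup is a solvable subgroup not properly contained in a solvable subgroup. $H\cdot G_0$ is the subgroup generated by $H$ and $G_0$. *)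

theory Defs
  imports "HOL-Algebra.Algebra"
begin

definition core :: "('a, 'b) monoid_scheme \<Rightarrow> 'a set \<Rightarrow> 'a set" where
  "core G H = (\<Inter>g\<in>carrier G. (inv\<^bsub>G\<^esub> g <#\<^bsub>G\<^esub> H) #>\<^bsub>G\<^esub> g)"

definition tuple_act :: "('a, 'b) monoid_scheme \<Rightarrow> nat \<Rightarrow> (nat \<Rightarrow> 'a set) \<Rightarrow> 'a \<Rightarrow> (nat \<Rightarrow> 'a set)" where
  "tuple_act G k w g = (\<lambda>i\<in>{..<k}. w i #>\<^bsub>G\<^esub> g)"

definition tuples :: "('a, 'b) monoid_scheme \<Rightarrow> 'a set \<Rightarrow> nat \<Rightarrow> (nat \<Rightarrow> 'a set) set" where
  "tuples G H k = {..<k} \<rightarrow>\<^sub>E rcosets\<^bsub>G\<^esub> H"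

definition tuple_orbit :: "('a, 'b) monoid_scheme \<Rightarrow> nat \<Rightarrow> (nat \<Rightarrow> 'a set) \<Rightarrow> (nat \<Rightarrow> 'a set) set" where
  "tuple_orbit G k w = tuple_act G k w ` carrier G"

definition tuple_stab :: "('a, 'b) monoid_scheme \<Rightarrow> nat \<Rightarrow> (nat \<Rightarrow> 'a set) \<Rightarrow> 'a set" where
  "tuple_stab G k w = {g \<in> carrier G. tuple_act G k w g = w}"

text \<open>Reg_H(G,k): number of orbits of G on Omega_H^k that are regular for G/H_G,
  i.e. orbits whose point stabilisers in G equal the kernel H_G.\<close>
definition Reg :: "('a, 'b) monoid_scheme \<Rightarrow> 'a set \<Rightarrow> nat \<Rightarrow> nat" where
  "Reg G H k = card {Orb. \<exists>w\<in>tuples G H k. Orb = tuple_orbit G k w \<and> tuple_stab G k w = core G H}"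

definition Inn :: "('a, 'b) monoid_scheme \<Rightarrow> ('a \<Rightarrow> 'a) set" where
  "Inn G0 = {(\<lambda>x\<in>carrier G0. g \<otimes>\<^bsub>G0\<^esub> x \<otimes>\<^bsub>G0\<^esub> inv\<^bsub>G0\<^esub> g) | g. g \<in> carrier G0}"

definition solvable_subgroup :: "('a, 'b) monoid_scheme \<Rightarrow> 'a set \<Rightarrow> bool" where
  "solvable_subgroup A H \<longleftrightarrow> subgroup H A \<and> solvable (A\<lparr>carrier := H\<rparr>)"

definition maximal_solvable_subgroup :: "('a, 'b) monoid_scheme \<Rightarrow> 'a set \<Rightarrow> bool" where
  "maximal_solvable_subgroup A H \<longleftrightarrow> solvable_subgroup A H \<and>
     (\<forall>K. solvable_subgroup A K \<and> H \<subseteq> K \<longrightarrow> K = H)"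

end

theory Submission
  imports Defs
begin

(*
  Choose a maximal solvable subgroup H of Aut(G0) containing S and let L = <H, Inn(G0)> = H Inn(G0).
  The core of H in L is a solvable subgroup of Aut(G0) normalised by Inn(G0). Its preimage in G0
  is a normal subgroup of G0; it is not all of G0 because G0 is not solvable, so it is trivial,
  which forces the core to centralise Inn(G0) and hence to be trivial. So the regular L-orbits
  on the k-tuples of cosets of H are the orbits with trivial stabiliser.

  Since L = H Inn(G0), each such orbit contains a tuple (H y_1, ..., H y_k) with all y_i in
  Inn(G0), which lies in G; send it to the G-orbit of (S y_1, ..., S y_k). If g in G maps
  (S y_i) to (S z_i), then g lies in y_1^-1 S z_1, a subset of L, and g maps (H y_i) to (H z_i).
  Applied to stabilisers this shows that the image orbit is regular, and applied to two tuples
  that the map is injective. Hence Reg_S(G,k) >= Reg_H(L,k) >= 5.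
*)

context group begin

lemma mult_inv_cancel [simp]: "x \<in> carrier G \<Longrightarrow> y \<in> carrier G \<Longrightarrow> x \<otimes> (inv x \<otimes> y) = y"
  by (simp flip: m_assoc)

lemma inv_mult_cancel [simp]: "x \<in> carrier G \<Longrightarrow> y \<in> carrier G \<Longrightarrow> inv x \<otimes> (x \<otimes> y) = y"
  by (simp flip: m_assoc)

lemma comm_group_if_conj_trivial:
  assumes "\<And>x y. x \<in> carrier G \<Longrightarrow> y \<in> carrier G \<Longrightarrow> x \<otimes> y \<otimes> inv x = y"
  shows "comm_group G"
  using assms by (intro group_comm_groupI) (metis inv_solve_right' m_closed)

lemma r_coset_eq_iff:
  assumes "subgroup H G" "x \<in> carrier G" "y \<in> carrier G"
  shows "H #> x = H #> y \<longleftrightarrow> x \<otimes> inv y \<in> H"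
proof -
  have Hc: "H \<subseteq> carrier G" and xy: "x \<otimes> inv y \<in> carrier G"
    using assms subgroup.subset by auto
  show ?thesis
  proof
    assume "H #> x = H #> y"
    then have "H #> (x \<otimes> inv y) = H" using assms(2,3) Hc by (rule coset_mult_inv2)
    then show "x \<otimes> inv y \<in> H" using xy assms(1) by (rule coset_join1)
  next
    assume "x \<otimes> inv y \<in> H"
    then have "H #> (x \<otimes> inv y) = H" using xy assms(1) by (intro coset_join2)
    then show "H #> x = H #> y" using assms(2,3) Hc by (rule coset_mult_inv1)
  qed
qed

lemma solvable_subgroup_subset:
  assumes K: "subgroup K G" and H: "subgroup H G" and KH: "K \<subseteq> H"
    and sol: "solvable (G\<lparr>carrier := H\<rparr>)"
  shows "solvable (G\<lparr>carrier := K\<rparr>)"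
proof -
  have "group_hom (G\<lparr>carrier := K\<rparr>) (G\<lparr>carrier := H\<rparr>) id"
    using KH by (intro group_hom.intro group_hom_axioms.intro subgroup_imp_group K H homI) auto
  then show ?thesis by (rule group_hom.inj_hom_imp_solvable[OF _ _ sol]) simp
qed

lemma solvable_subgroup_of_carrier_update:
  assumes "subgroup K G" and "solvable_subgroup (G\<lparr>carrier := K\<rparr>) S"
  shows "solvable_subgroup G S"
  using assms incl_subgroup unfolding solvable_subgroup_def by auto

lemma ex_maximal_solvable_subgroup:
  assumes fin: "finite (carrier G)" and S: "solvable_subgroup G S"
  obtains H where "maximal_solvable_subgroup G H" "S \<subseteq> H"
proof -
  have "{K. solvable_subgroup G K} \<subseteq> Pow (carrier G)"
    unfolding solvable_subgroup_def using subgroup.subset by blast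
  then have "finite {K. solvable_subgroup G K}"
    using fin by (meson finite_Pow_iff finite_subset)
  then obtain H where "H \<in> {K. solvable_subgroup G K}" "S \<subseteq> H"
    "\<forall>K \<in> {K. solvable_subgroup G K}. H \<subseteq> K \<longrightarrow> H = K"
    using finite_has_maximal2 S by (metis mem_Collect_eq)
  then show ?thesis
    using that unfolding maximal_solvable_subgroup_def by blast
qed

lemma generate_Un_normal_subset_set_mult:
  assumes H: "subgroup H G" and N: "N \<lhd> G"
  shows "generate G (H \<union> N) \<subseteq> H <#> N"
proof -
  interpret second_isomorphism_grp N G H
    by (intro second_isomorphism_grp.intro second_isomorphism_grp_axioms.intro N H)
  have "H <#> N = N <#> H" using H N by (rule commut_normal)
  then show ?thesis
    using normal_set_mult_subgroup H_contained_in_set_mult S_contained_in_set_mult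
    by (intro generate_subgroup_incl) auto
qed

end

lemma (in group_hom) normal_vimage:
  assumes K: "subgroup K H"
    and normalized: "\<And>g n. g \<in> carrier G \<Longrightarrow> n \<in> K \<Longrightarrow> h g \<otimes>\<^bsub>H\<^esub> n \<otimes>\<^bsub>H\<^esub> inv\<^bsub>H\<^esub> h g \<in> K"
  shows "{x \<in> carrier G. h x \<in> K} \<lhd> G"
proof (rule G.normal_invI)
  show "subgroup {x \<in> carrier G. h x \<in> K} G"
  proof (rule G.subgroupI)
    show "{x \<in> carrier G. h x \<in> K} \<noteq> {}"
      using subgroup.one_closed[OF K] by force
  qed (auto simp: subgroup.m_closed[OF K] subgroup.m_inv_closed[OF K])
  show "x \<otimes> n \<otimes> inv x \<in> {x \<in> carrier G. h x \<in> K}"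
    if "x \<in> carrier G" "n \<in> {x \<in> carrier G. h x \<in> K}" for x n
    using that normalized by simp
qed

lemma card_image_le_card_image:
  assumes "finite (g ` A)" and "\<And>x y. x \<in> A \<Longrightarrow> y \<in> A \<Longrightarrow> g x = g y \<Longrightarrow> f x = f y"
  shows "card (f ` A) \<le> card (g ` A)"
proof -
  have "f x = f (inv_into A g (g x))" if "x \<in> A" for x
    using that by (metis assms(2) f_inv_into_f imageI inv_into_into)
  then have "f ` A = (\<lambda>b. f (inv_into A g b)) ` g ` A"
    by (simp add: image_image cong: image_cong)
  then show ?thesis using card_image_le[OF assms(1)] by simp
qed

lemma (in simple_group) solvable_imp_comm_group:
  assumes "solvable G" shows "comm_group G"
proof -
  have "derived G (carrier G) \<lhd> G" by (rule derived_self_is_normal)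
  then have "derived G (carrier G) = carrier G \<or> derived G (carrier G) = {\<one>}"
    by (rule no_real_normal_subgroup)
  then show ?thesis
  proof
    assume perfect: "derived G (carrier G) = carrier G"
    have "(derived G ^^ n) (carrier G) = carrier G" for n
      by (induction n) (simp_all add: perfect)
    moreover obtain n where "(derived G ^^ n) (carrier G) = {\<one>}"
      using assms solvable_iff_trivial_derived_seq by blast
    ultimately show ?thesis using simple_not_triv by simp
  next
    assume "derived G (carrier G) = {\<one>}"
    then have "x \<otimes> y \<otimes> inv x \<otimes> inv y = \<one>" if "x \<in> carrier G" "y \<in> carrier G" for x y
    proof -
      have "x \<otimes> y \<otimes> inv x \<otimes> inv y \<in> derived_set G (carrier G)" using that by blast
      then show ?thesis
        using \<open>derived G (carrier G) = {\<one>}\<close> unfolding derived_def by (blast intro: generate.incl)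
    qed
    then show ?thesis
      using inv_solve_right'[of \<one>] by (intro comm_group_if_conj_trivial) simp
  qed
qed

section \<open>Inner automorphisms\<close>

definition inner_aut :: "('a, 'b) monoid_scheme \<Rightarrow> 'a \<Rightarrow> ('a \<Rightarrow> 'a)" where
  "inner_aut G g = (\<lambda>x\<in>carrier G. g \<otimes>\<^bsub>G\<^esub> x \<otimes>\<^bsub>G\<^esub> inv\<^bsub>G\<^esub> g)"

context group begin

lemma Inn_eq_image_inner_aut: "Inn G = inner_aut G ` carrier G"
  unfolding Inn_def inner_aut_def by auto

lemma carrier_AutoGroup: "carrier (AutoGroup G) = auto G"
  by (simp add: AutoGroup_def)

lemma one_AutoGroup: "\<one>\<^bsub>AutoGroup G\<^esub> = (\<lambda>x\<in>carrier G. x)"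
  by (simp add: AutoGroup_def BijGroup_def)

lemma mult_AutoGroup:
  "a \<in> auto G \<Longrightarrow> b \<in> auto G \<Longrightarrow> a \<otimes>\<^bsub>AutoGroup G\<^esub> b = compose (carrier G) a b"
  by (simp add: AutoGroup_def BijGroup_def auto_def)

lemma finite_AutoGroup:
  assumes "finite (carrier G)" shows "finite (carrier (AutoGroup G))"
proof -
  have "auto G \<subseteq> carrier G \<rightarrow>\<^sub>E carrier G"
    by (auto simp: auto_def Bij_def bij_betw_def hom_def extensional_def)
  then show ?thesis
    using assms by (metis carrier_AutoGroup finite_PiE finite_subset)
qed

lemma inner_aut_in_auto:
  assumes g: "g \<in> carrier G" shows "inner_aut G g \<in> auto G"
proof -
  have "inner_aut G g \<in> hom G G"
    by (rule homI) (auto simp: inner_aut_def g m_assoc inv_solve_left)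
  moreover have "inner_aut G g \<in> Bij (carrier G)"
    using conjugation_is_bij[OF g] by (simp add: Bij_def inner_aut_def)
  ultimately show ?thesis by (simp add: auto_def)
qed

lemma group_hom_inner_aut: "group_hom G (AutoGroup G) (inner_aut G)"
proof -
  interpret A: group "AutoGroup G" by (rule AutoGroup)
  show ?thesis
  proof (unfold_locales, rule homI)
    show "inner_aut G x \<in> carrier (AutoGroup G)" if "x \<in> carrier G" for x
      using that by (simp add: carrier_AutoGroup inner_aut_in_auto)
    show "inner_aut G (x \<otimes> y) = inner_aut G x \<otimes>\<^bsub>AutoGroup G\<^esub> inner_aut G y"
      if "x \<in> carrier G" "y \<in> carrier G" for x y
      using that
      by (simp add: mult_AutoGroup inner_aut_in_auto)
        (auto simp: compose_def inner_aut_def m_assoc inv_mult_group)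
  qed
qed

lemma AutoGroup_conj_inner_aut:
  assumes a: "a \<in> auto G" and g: "g \<in> carrier G"
  shows "a \<otimes>\<^bsub>AutoGroup G\<^esub> inner_aut G g \<otimes>\<^bsub>AutoGroup G\<^esub> inv\<^bsub>AutoGroup G\<^esub> a
    = inner_aut G (a g)"
proof -
  interpret A: group "AutoGroup G" by (rule AutoGroup)
  interpret a: group_hom G G a
    using a by (simp add: auto_def group_hom_def group_hom_axioms_def is_group)
  have ag: "a g \<in> carrier G" using g by simp
  have "compose (carrier G) a (inner_aut G g) = compose (carrier G) (inner_aut G (a g)) a"
    using g by (auto simp: compose_def inner_aut_def)
  then have "a \<otimes>\<^bsub>AutoGroup G\<^esub> inner_aut G g = inner_aut G (a g) \<otimes>\<^bsub>AutoGroup G\<^esub> a"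
    using a g ag by (simp add: mult_AutoGroup inner_aut_in_auto)
  moreover have "a \<in> carrier (AutoGroup G)" "inner_aut G (a g) \<in> carrier (AutoGroup G)"
    using a ag by (simp_all add: carrier_AutoGroup inner_aut_in_auto)
  ultimately show ?thesis
    by (simp add: A.m_assoc)
qed

lemma inner_aut_commutator:
  assumes a: "a \<in> auto G" and g: "g \<in> carrier G"
  shows "inner_aut G (a g \<otimes> inv g) = a \<otimes>\<^bsub>AutoGroup G\<^esub>
    (inner_aut G g \<otimes>\<^bsub>AutoGroup G\<^esub> inv\<^bsub>AutoGroup G\<^esub> a \<otimes>\<^bsub>AutoGroup G\<^esub> inv\<^bsub>AutoGroup G\<^esub> inner_aut G g)"
proof -
  interpret A: group "AutoGroup G" by (rule AutoGroup)
  interpret i: group_hom G "AutoGroup G" "inner_aut G" by (rule group_hom_inner_aut)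
  have ag: "a g \<in> carrier G" using a g by (auto simp: auto_def hom_def)
  have "inner_aut G (a g \<otimes> inv g)
      = a \<otimes>\<^bsub>AutoGroup G\<^esub> inner_aut G g \<otimes>\<^bsub>AutoGroup G\<^esub> inv\<^bsub>AutoGroup G\<^esub> a
        \<otimes>\<^bsub>AutoGroup G\<^esub> inv\<^bsub>AutoGroup G\<^esub> inner_aut G g"
    using ag g by (simp add: AutoGroup_conj_inner_aut[OF a g])
  also have "\<dots> = a \<otimes>\<^bsub>AutoGroup G\<^esub> (inner_aut G g \<otimes>\<^bsub>AutoGroup G\<^esub> inv\<^bsub>AutoGroup G\<^esub> a
        \<otimes>\<^bsub>AutoGroup G\<^esub> inv\<^bsub>AutoGroup G\<^esub> inner_aut G g)"
    using a g A.inv_closed by (simp add: A.m_assoc carrier_AutoGroup[symmetric] inner_aut_in_auto)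
  finally show ?thesis .
qed

lemma Inn_normal_AutoGroup: "Inn G \<lhd> AutoGroup G"
proof -
  interpret A: group "AutoGroup G" by (rule AutoGroup)
  interpret i: group_hom G "AutoGroup G" "inner_aut G" by (rule group_hom_inner_aut)
  show ?thesis
  proof (rule A.normal_invI)
    show "subgroup (Inn G) (AutoGroup G)"
      unfolding Inn_eq_image_inner_aut by (rule i.img_is_subgroup)
    show "a \<otimes>\<^bsub>AutoGroup G\<^esub> n \<otimes>\<^bsub>AutoGroup G\<^esub> inv\<^bsub>AutoGroup G\<^esub> a \<in> Inn G"
      if "a \<in> carrier (AutoGroup G)" "n \<in> Inn G" for a n
      using that AutoGroup_conj_inner_aut
      by (auto simp: Inn_eq_image_inner_aut carrier_AutoGroup auto_def hom_def)
  qed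
qed

end

lemma (in simple_group) inj_inner_aut:
  assumes "\<not> comm_group G" shows "inj_on (inner_aut G) (carrier G)"
proof -
  interpret i: group_hom G "AutoGroup G" "inner_aut G" by (rule group_hom_inner_aut)
  have "kernel G (AutoGroup G) (inner_aut G) \<noteq> carrier G"
  proof
    assume central: "kernel G (AutoGroup G) (inner_aut G) = carrier G"
    have "x \<otimes> y \<otimes> inv x = y" if "x \<in> carrier G" "y \<in> carrier G" for x y
    proof -
      have "inner_aut G x = (\<lambda>z\<in>carrier G. z)"
        using central that by (auto simp: kernel_def one_AutoGroup)
      then have "inner_aut G x y = y" using that by simp
      then show ?thesis using that by (simp add: inner_aut_def)
    qed
    then have "comm_group G" by (rule comm_group_if_conj_trivial)
    with assms show False by blast
  qed
  then show ?thesis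
    using no_real_normal_subgroup[OF i.normal_kernel] i.trivial_ker_imp_inj by blast
qed

lemma (in simple_group) solvable_subgroup_normalized_by_Inn_trivial:
  assumes nc: "\<not> comm_group G"
    and N: "subgroup N (AutoGroup G)" and sol: "solvable ((AutoGroup G)\<lparr>carrier := N\<rparr>)"
    and normalized: "\<And>a n. a \<in> Inn G \<Longrightarrow> n \<in> N \<Longrightarrow>
      a \<otimes>\<^bsub>AutoGroup G\<^esub> n \<otimes>\<^bsub>AutoGroup G\<^esub> inv\<^bsub>AutoGroup G\<^esub> a \<in> N"
  shows "N = {\<one>\<^bsub>AutoGroup G\<^esub>}"
proof -
  interpret A: group "AutoGroup G" by (rule AutoGroup)
  interpret i: group_hom G "AutoGroup G" "inner_aut G" by (rule group_hom_inner_aut)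
  define M where "M = {g \<in> carrier G. inner_aut G g \<in> N}"
  have "M \<lhd> G"
    unfolding M_def using N normalized by (rule i.normal_vimage) (simp add: Inn_eq_image_inner_aut)
  then have "M = carrier G \<or> M = {\<one>}" by (rule no_real_normal_subgroup)
  moreover have "M \<noteq> carrier G"
  proof
    assume "M = carrier G"
    then have "group_hom G ((AutoGroup G)\<lparr>carrier := N\<rparr>) (inner_aut G)"
      unfolding M_def
      by (intro group_hom.intro group_hom_axioms.intro is_group A.subgroup_imp_group[OF N] homI)
        auto
    then have "solvable G"
      using inj_inner_aut[OF nc] sol by (rule group_hom.inj_hom_imp_solvable)
    then show False using nc solvable_imp_comm_group by blast
  qed
  ultimately have M_trivial: "M = {\<one>}" by blast
  have "a = \<one>\<^bsub>AutoGroup G\<^esub>" if a: "a \<in> N" for a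
  proof -
    have a_aut: "a \<in> auto G" using a subgroup.subset[OF N] carrier_AutoGroup by blast
    have "a g = g" if g: "g \<in> carrier G" for g
    proof -
      have ag: "a g \<in> carrier G" using a_aut g by (auto simp: auto_def hom_def)
      have "inner_aut G (a g \<otimes> inv g) \<in> N"
        unfolding inner_aut_commutator[OF a_aut g] using g
        by (intro subgroup.m_closed[OF N a] normalized subgroup.m_inv_closed[OF N a])
          (simp add: Inn_eq_image_inner_aut)
      then have "a g \<otimes> inv g \<in> M" unfolding M_def using ag g by simp
      then show "a g = g" using M_trivial ag g inv_solve_right'[of \<one> "a g" g] by simp
    qed
    then show ?thesis
      using a_aut by (auto simp: one_AutoGroup auto_def Bij_def extensional_def)
  qed
  then show ?thesis using subgroup.one_closed[OF N] by blast
qed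

section \<open>Cores\<close>

context group begin

lemma mem_conjugate_iff:
  assumes x: "x \<in> carrier G" and H: "H \<subseteq> carrier G"
  shows "n \<in> (inv x <# H) #> x \<longleftrightarrow> n \<in> carrier G \<and> x \<otimes> n \<otimes> inv x \<in> H"
proof
  assume "n \<in> (inv x <# H) #> x"
  then obtain h where h: "h \<in> H" "n = inv x \<otimes> h \<otimes> x"
    unfolding l_coset_def r_coset_def by auto
  moreover have "h \<in> carrier G" using h H by blast
  ultimately show "n \<in> carrier G \<and> x \<otimes> n \<otimes> inv x \<in> H"
    using x by (simp add: m_assoc)
next
  assume n: "n \<in> carrier G \<and> x \<otimes> n \<otimes> inv x \<in> H"
  then have "n = inv x \<otimes> (x \<otimes> n \<otimes> inv x) \<otimes> x" using x by (simp add: m_assoc)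
  then show "n \<in> (inv x <# H) #> x"
    using n unfolding l_coset_def r_coset_def by blast
qed

lemma mem_core_iff:
  assumes L: "subgroup L G" and H: "subgroup H G" and HL: "H \<subseteq> L"
  shows "n \<in> core (G\<lparr>carrier := L\<rparr>) H \<longleftrightarrow> n \<in> L \<and> (\<forall>x\<in>L. x \<otimes> n \<otimes> inv x \<in> H)"
proof -
  have "n \<in> core (G\<lparr>carrier := L\<rparr>) H \<longleftrightarrow> (\<forall>x\<in>L. n \<in> (inv x <# H) #> x)"
    unfolding core_def using L by (auto simp: m_inv_consistent)
  also have "\<dots> \<longleftrightarrow> (\<forall>x\<in>L. n \<in> carrier G \<and> x \<otimes> n \<otimes> inv x \<in> H)"
    using mem_conjugate_iff subgroup.subset[OF L] subgroup.subset[OF H] by blast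
  also have "\<dots> \<longleftrightarrow> n \<in> L \<and> (\<forall>x\<in>L. x \<otimes> n \<otimes> inv x \<in> H)"
    using subgroup.one_closed[OF L] subgroup.subset[OF L] HL by force
  finally show ?thesis .
qed

lemma core_subset:
  assumes "subgroup L G" "subgroup H G" "H \<subseteq> L"
  shows "core (G\<lparr>carrier := L\<rparr>) H \<subseteq> H"
proof
  fix n assume "n \<in> core (G\<lparr>carrier := L\<rparr>) H"
  then have "n \<in> L" "\<one> \<otimes> n \<otimes> inv \<one> \<in> H"
    using mem_core_iff[OF assms] subgroup.one_closed[OF assms(1)] by auto
  then show "n \<in> H" using subgroup.mem_carrier[OF assms(1)] by simp
qed

lemma conj_mem_core:
  assumes L: "subgroup L G" and H: "subgroup H G" and HL: "H \<subseteq> L"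
    and y: "y \<in> L" and n: "n \<in> core (G\<lparr>carrier := L\<rparr>) H"
  shows "y \<otimes> n \<otimes> inv y \<in> core (G\<lparr>carrier := L\<rparr>) H"
proof -
  have nL: "n \<in> L" and conj: "\<And>x. x \<in> L \<Longrightarrow> x \<otimes> n \<otimes> inv x \<in> H"
    using n mem_core_iff[OF L H HL] by auto
  have "x \<otimes> (y \<otimes> n \<otimes> inv y) \<otimes> inv x = (x \<otimes> y) \<otimes> n \<otimes> inv (x \<otimes> y)" if "x \<in> L" for x
    using that y nL subgroup.mem_carrier[OF L] by (simp add: m_assoc inv_mult_group)
  then show ?thesis
    unfolding mem_core_iff[OF L H HL]
    using y nL conj subgroup.m_closed[OF L] subgroup.m_inv_closed[OF L] by simp
qed

lemma core_subgroup:
  assumes L: "subgroup L G" and H: "subgroup H G" and HL: "H \<subseteq> L"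
  shows "subgroup (core (G\<lparr>carrier := L\<rparr>) H) G"
proof (rule subgroupI)
  note mem = mem_core_iff[OF L H HL]
  have Lc: "L \<subseteq> carrier G" by (rule subgroup.subset[OF L])
  show "core (G\<lparr>carrier := L\<rparr>) H \<subseteq> carrier G" using mem Lc by blast
  show "core (G\<lparr>carrier := L\<rparr>) H \<noteq> {}"
    using mem Lc subgroup.one_closed[OF L] subgroup.one_closed[OF H] by force
  show "inv n \<in> core (G\<lparr>carrier := L\<rparr>) H" if "n \<in> core (G\<lparr>carrier := L\<rparr>) H" for n
  proof -
    have "x \<otimes> inv n \<otimes> inv x = inv (x \<otimes> n \<otimes> inv x)" if "x \<in> L" "n \<in> L" for x
      using that subgroup.mem_carrier[OF L] by (simp add: m_assoc inv_mult_group)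
    then show ?thesis
      using \<open>n \<in> core _ H\<close> subgroup.m_inv_closed[OF L] subgroup.m_inv_closed[OF H]
      unfolding mem by simp
  qed
  show "n \<otimes> m \<in> core (G\<lparr>carrier := L\<rparr>) H"
    if "n \<in> core (G\<lparr>carrier := L\<rparr>) H" "m \<in> core (G\<lparr>carrier := L\<rparr>) H" for n m
  proof -
    have "x \<otimes> (n \<otimes> m) \<otimes> inv x = (x \<otimes> n \<otimes> inv x) \<otimes> (x \<otimes> m \<otimes> inv x)"
      if "x \<in> L" "n \<in> L" "m \<in> L" for x
      using that subgroup.mem_carrier[OF L] by (simp add: m_assoc)
    then show ?thesis
      using that subgroup.m_closed[OF L] subgroup.m_closed[OF H] unfolding mem by simp
  qed
qed

end

lemma (in simple_group) core_of_solvable_subgroup_trivial: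
  assumes nc: "\<not> comm_group G"
    and L: "subgroup L (AutoGroup G)" and Inn_L: "Inn G \<subseteq> L"
    and H: "subgroup H (AutoGroup G)" and HL: "H \<subseteq> L" and sol: "solvable ((AutoGroup G)\<lparr>carrier := H\<rparr>)"
  shows "core ((AutoGroup G)\<lparr>carrier := L\<rparr>) H = {\<one>\<^bsub>AutoGroup G\<^esub>}"
proof (rule solvable_subgroup_normalized_by_Inn_trivial[OF nc])
  interpret A: group "AutoGroup G" by (rule AutoGroup)
  show "subgroup (core ((AutoGroup G)\<lparr>carrier := L\<rparr>) H) (AutoGroup G)"
    by (rule A.core_subgroup[OF L H HL])
  then show "solvable ((AutoGroup G)\<lparr>carrier := core ((AutoGroup G)\<lparr>carrier := L\<rparr>) H\<rparr>)"
    using H A.core_subset[OF L H HL] sol by (rule A.solvable_subgroup_subset)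
  show "a \<otimes>\<^bsub>AutoGroup G\<^esub> n \<otimes>\<^bsub>AutoGroup G\<^esub> inv\<^bsub>AutoGroup G\<^esub> a
      \<in> core ((AutoGroup G)\<lparr>carrier := L\<rparr>) H"
    if "a \<in> Inn G" "n \<in> core ((AutoGroup G)\<lparr>carrier := L\<rparr>) H" for a n
    using that Inn_L by (intro A.conj_mem_core[OF L H HL]) auto
qed

section \<open>Regular orbits on tuples of cosets\<close>

definition coset_tuple :: "('a, 'b) monoid_scheme \<Rightarrow> 'a set \<Rightarrow> nat \<Rightarrow> (nat \<Rightarrow> 'a) \<Rightarrow> nat \<Rightarrow> 'a set" where
  "coset_tuple G H k y = (\<lambda>i\<in>{..<k}. H #>\<^bsub>G\<^esub> y i)"

definition regular_orbits :: "('a, 'b) monoid_scheme \<Rightarrow> 'a set \<Rightarrow> nat \<Rightarrow> (nat \<Rightarrow> 'a set) set set" where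
  "regular_orbits G H k =
    {Orb. \<exists>w\<in>tuples G H k. Orb = tuple_orbit G k w \<and> tuple_stab G k w = core G H}"

lemma Reg_eq_card_regular_orbits: "Reg G H k = card (regular_orbits G H k)"
  by (simp add: Reg_def regular_orbits_def)

context group begin

lemma tuple_act_carrier_update [simp]: "tuple_act (G\<lparr>carrier := Y\<rparr>) = tuple_act G"
  by (simp add: tuple_act_def fun_eq_iff)

lemma tuple_orbit_carrier_update: "tuple_orbit (G\<lparr>carrier := Y\<rparr>) k w = tuple_act G k w ` Y"
  by (simp add: tuple_orbit_def)

lemma tuple_stab_carrier_update:
  "tuple_stab (G\<lparr>carrier := Y\<rparr>) k w = {g \<in> Y. tuple_act G k w g = w}"
  by (simp add: tuple_stab_def)

lemma tuples_carrier_update: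
  "tuples (G\<lparr>carrier := Y\<rparr>) H k = coset_tuple G H k ` ({..<k} \<rightarrow> Y)"
proof
  show "tuples (G\<lparr>carrier := Y\<rparr>) H k \<subseteq> coset_tuple G H k ` ({..<k} \<rightarrow> Y)"
  proof
    fix w assume "w \<in> tuples (G\<lparr>carrier := Y\<rparr>) H k"
    then have w: "w \<in> extensional {..<k}" "\<forall>i\<in>{..<k}. \<exists>y\<in>Y. w i = H #> y"
      by (auto simp: tuples_def RCOSETS_def PiE_iff)
    then obtain y where "\<forall>i\<in>{..<k}. y i \<in> Y \<and> w i = H #> y i" by metis
    moreover from this have "w = coset_tuple G H k y"
      using w(1) by (auto simp: coset_tuple_def extensional_def fun_eq_iff)
    ultimately show "w \<in> coset_tuple G H k ` ({..<k} \<rightarrow> Y)" by auto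
  qed
  show "coset_tuple G H k ` ({..<k} \<rightarrow> Y) \<subseteq> tuples (G\<lparr>carrier := Y\<rparr>) H k"
    by (auto simp: tuples_def RCOSETS_def coset_tuple_def)
qed

lemma finite_tuples:
  assumes "finite Y" shows "finite (tuples (G\<lparr>carrier := Y\<rparr>) H k)"
  unfolding tuples_def RCOSETS_def using assms by (intro finite_PiE finite_UN_I) simp_all

lemma coset_tuple_cong: "(\<And>i. i < k \<Longrightarrow> y i = z i) \<Longrightarrow> coset_tuple G H k y = coset_tuple G H k z"
  unfolding coset_tuple_def by (intro restrict_ext) simp

lemma tuple_act_coset_tuple:
  assumes "H \<subseteq> carrier G" "\<forall>i<k. y i \<in> carrier G" "g \<in> carrier G"
  shows "tuple_act G k (coset_tuple G H k y) g = coset_tuple G H k (\<lambda>i. y i \<otimes> g)"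
  unfolding tuple_act_def coset_tuple_def using assms by (intro restrict_ext) (simp add: coset_mult_assoc)

lemma coset_tuple_eq_iff:
  assumes "subgroup H G" "\<forall>i<k. y i \<in> carrier G" "\<forall>i<k. z i \<in> carrier G"
  shows "coset_tuple G H k y = coset_tuple G H k z \<longleftrightarrow> (\<forall>i<k. y i \<otimes> inv z i \<in> H)"
proof -
  have "coset_tuple G H k y = coset_tuple G H k z \<longleftrightarrow> (\<forall>i<k. H #> y i = H #> z i)"
    unfolding coset_tuple_def fun_eq_iff by auto
  then show ?thesis using assms by (simp add: r_coset_eq_iff)
qed

lemma coset_tuple_eq_mono:
  assumes "subgroup S G" "subgroup H G" "S \<subseteq> H" "\<forall>i<k. y i \<in> carrier G" "\<forall>i<k. z i \<in> carrier G"
    and "coset_tuple G S k y = coset_tuple G S k z"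
  shows "coset_tuple G H k y = coset_tuple G H k z"
proof -
  have "\<forall>i<k. y i \<otimes> inv z i \<in> S" using assms(6) coset_tuple_eq_iff[OF assms(1,4,5)] by simp
  then show ?thesis using coset_tuple_eq_iff[OF assms(2,4,5)] assms(3) by blast
qed

lemma mem_subgroup_if_coset_tuple_eq:
  assumes L: "subgroup L G" and S: "subgroup S G" "S \<subseteq> L" and k: "0 < k"
    and y: "y 0 \<in> L" and z: "z 0 \<in> L" and x: "x \<in> carrier G"
    and "\<forall>i<k. y i \<in> carrier G" "\<forall>i<k. z i \<in> carrier G"
    and eq: "coset_tuple G S k (\<lambda>i. y i \<otimes> x) = coset_tuple G S k z"
  shows "x \<in> L"
proof -
  have yc: "y 0 \<in> carrier G" and zc: "z 0 \<in> carrier G"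
    using y z subgroup.mem_carrier[OF L] by auto
  have "\<forall>i<k. y i \<otimes> x \<otimes> inv z i \<in> S"
    using eq coset_tuple_eq_iff[OF S(1), of k "\<lambda>i. y i \<otimes> x" z] assms(8,9) x by simp
  then have "y 0 \<otimes> x \<otimes> inv z 0 \<in> L" using k S(2) by blast
  then have "inv y 0 \<otimes> (y 0 \<otimes> x \<otimes> inv z 0) \<otimes> z 0 \<in> L"
    using subgroup.m_closed[OF L subgroup.m_closed[OF L subgroup.m_inv_closed[OF L y]] z] by blast
  then show ?thesis using x yc zc by (simp add: m_assoc)
qed

lemma tuple_orbit_coset_tuple_shift:
  assumes Y: "subgroup Y G" and H: "H \<subseteq> carrier G" and y: "\<forall>i<k. y i \<in> carrier G" and x: "x \<in> Y"
  shows "tuple_act G k (coset_tuple G H k (\<lambda>i. y i \<otimes> x)) ` Y = tuple_act G k (coset_tuple G H k y) ` Y"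
proof -
  have xc: "x \<in> carrier G" using x subgroup.mem_carrier[OF Y] by blast
  have "tuple_act G k (coset_tuple G H k (\<lambda>i. y i \<otimes> x)) g = tuple_act G k (coset_tuple G H k y) (x \<otimes> g)"
    if "g \<in> Y" for g
  proof -
    have gc: "g \<in> carrier G" using that subgroup.mem_carrier[OF Y] by blast
    have "coset_tuple G H k (\<lambda>i. y i \<otimes> x \<otimes> g) = coset_tuple G H k (\<lambda>i. y i \<otimes> (x \<otimes> g))"
      using y xc gc by (intro coset_tuple_cong) (simp add: m_assoc)
    then show ?thesis using H y xc gc by (simp add: tuple_act_coset_tuple)
  qed
  then have "tuple_act G k (coset_tuple G H k (\<lambda>i. y i \<otimes> x)) ` Y
      = (\<lambda>g. tuple_act G k (coset_tuple G H k y) g) ` (\<lambda>g. x \<otimes> g) ` Y"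
    by (simp add: image_image cong: image_cong)
  also have "(\<lambda>g. x \<otimes> g) ` Y = Y"
    using coset_join3[OF xc Y x] by (simp add: l_coset_def UNION_singleton_eq_range)
  finally show ?thesis .
qed

lemma core_subset_tuple_stab:
  assumes L: "subgroup L G" and H: "subgroup H G" "H \<subseteq> L" and y: "\<forall>i<k. y i \<in> L"
  shows "core (G\<lparr>carrier := L\<rparr>) H \<subseteq> tuple_stab (G\<lparr>carrier := L\<rparr>) k (coset_tuple G H k y)"
proof
  fix c assume c: "c \<in> core (G\<lparr>carrier := L\<rparr>) H"
  then have cL: "c \<in> L" and conj: "\<forall>i<k. y i \<otimes> c \<otimes> inv (y i) \<in> H"
    using y mem_core_iff[OF L H] by auto
  have "coset_tuple G H k (\<lambda>i. y i \<otimes> c) = coset_tuple G H k y"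
    using conj y cL subgroup.mem_carrier[OF L] by (simp add: coset_tuple_eq_iff H)
  then show "c \<in> tuple_stab (G\<lparr>carrier := L\<rparr>) k (coset_tuple G H k y)"
    using cL y subgroup.mem_carrier[OF L] subgroup.subset[OF H(1)]
    by (simp add: tuple_stab_carrier_update tuple_act_coset_tuple)
qed

end

text \<open>In the application, \<open>G\<close> is \<open>Aut(G0)\<close>, \<open>Gs\<close> is the group called \<open>G\<close> in the theorem
  and \<open>K\<close> is \<open>Inn(G0)\<close>.\<close>

locale regular_orbit_comparison = group +
  fixes Gs L S H K :: "'a set"
  assumes subgroup_Gs: "subgroup Gs G" and subgroup_L: "subgroup L G"
    and subgroup_S: "subgroup S G" and subgroup_H: "subgroup H G"
    and S_H: "S \<subseteq> H" and H_L: "H \<subseteq> L" and S_Gs: "S \<subseteq> Gs" and K_Gs: "K \<subseteq> Gs" and K_L: "K \<subseteq> L"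
    and L_factor: "L \<subseteq> H <#> K"
    and core_trivial: "core (G\<lparr>carrier := L\<rparr>) H = {\<one>}"
begin

definition regular_reps :: "nat \<Rightarrow> (nat \<Rightarrow> 'a) set" where
  "regular_reps k = {y \<in> {..<k} \<rightarrow> K.
     tuple_stab (G\<lparr>carrier := L\<rparr>) k (coset_tuple G H k y) = core (G\<lparr>carrier := L\<rparr>) H}"

lemma K_carrier: "K \<subseteq> carrier G"
  using K_L subgroup.subset[OF subgroup_L] by blast

lemma coset_tuple_factor:
  assumes y: "y \<in> {..<k} \<rightarrow> L"
  obtains z where "z \<in> {..<k} \<rightarrow> K" "coset_tuple G H k y = coset_tuple G H k z"
proof -
  have "\<exists>z\<in>K. H #> y i = H #> z" if i: "i < k" for i
  proof -
    obtain h z where hz: "h \<in> H" "z \<in> K" "y i = h \<otimes> z"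
      using y i L_factor unfolding set_mult_def by blast
    have hc: "h \<in> carrier G" and zc: "z \<in> carrier G"
      using hz K_carrier subgroup.mem_carrier[OF subgroup_H] by auto
    then have "y i \<otimes> inv z = h" using hz(3) by (simp add: m_assoc)
    then have "H #> y i = H #> z" using hz hc zc by (simp add: r_coset_eq_iff[OF subgroup_H])
    then show ?thesis using hz(2) by blast
  qed
  then obtain z where "\<forall>i<k. z i \<in> K \<and> H #> y i = H #> z i" by metis
  then show ?thesis
    by (intro that[of z]) (auto simp: coset_tuple_def intro: restrict_ext)
qed

lemma regular_orbits_L:
  "regular_orbits (G\<lparr>carrier := L\<rparr>) H k
    = (\<lambda>y. tuple_orbit (G\<lparr>carrier := L\<rparr>) k (coset_tuple G H k y)) ` regular_reps k"
proof
  show "regular_orbits (G\<lparr>carrier := L\<rparr>) H k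
    \<subseteq> (\<lambda>y. tuple_orbit (G\<lparr>carrier := L\<rparr>) k (coset_tuple G H k y)) ` regular_reps k"
  proof
    fix Orb assume "Orb \<in> regular_orbits (G\<lparr>carrier := L\<rparr>) H k"
    then obtain y where y: "y \<in> {..<k} \<rightarrow> L"
      and Orb: "Orb = tuple_orbit (G\<lparr>carrier := L\<rparr>) k (coset_tuple G H k y)"
      and stab: "tuple_stab (G\<lparr>carrier := L\<rparr>) k (coset_tuple G H k y) = core (G\<lparr>carrier := L\<rparr>) H"
      unfolding regular_orbits_def tuples_carrier_update by blast
    obtain z where "z \<in> {..<k} \<rightarrow> K" "coset_tuple G H k y = coset_tuple G H k z"
      using coset_tuple_factor[OF y] .
    with Orb stab show "Orb \<in> (\<lambda>y. tuple_orbit (G\<lparr>carrier := L\<rparr>) k (coset_tuple G H k y)) ` regular_reps k"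
      unfolding regular_reps_def by auto
  qed
  show "(\<lambda>y. tuple_orbit (G\<lparr>carrier := L\<rparr>) k (coset_tuple G H k y)) ` regular_reps k
    \<subseteq> regular_orbits (G\<lparr>carrier := L\<rparr>) H k"
    using K_L unfolding regular_orbits_def regular_reps_def tuples_carrier_update by blast
qed

lemma tuple_stab_Gs_trivial:
  assumes k: "0 < k" and y: "y \<in> regular_reps k"
  shows "tuple_stab (G\<lparr>carrier := Gs\<rparr>) k (coset_tuple G S k y) \<subseteq> {\<one>}"
proof
  have yK: "\<forall>i<k. y i \<in> K" and y_stab:
    "tuple_stab (G\<lparr>carrier := L\<rparr>) k (coset_tuple G H k y) = core (G\<lparr>carrier := L\<rparr>) H"
    using y unfolding regular_reps_def by auto
  have yc: "\<forall>i<k. y i \<in> carrier G" using yK K_carrier by blast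
  fix c assume "c \<in> tuple_stab (G\<lparr>carrier := Gs\<rparr>) k (coset_tuple G S k y)"
  then have c: "c \<in> Gs" and fix_S: "coset_tuple G S k (\<lambda>i. y i \<otimes> c) = coset_tuple G S k y"
    using subgroup.subset[OF subgroup_S] yc subgroup.mem_carrier[OF subgroup_Gs]
    by (auto simp: tuple_stab_carrier_update tuple_act_coset_tuple)
  have cc: "c \<in> carrier G" using c subgroup.mem_carrier[OF subgroup_Gs] by blast
  have "c \<in> L"
    using subgroup_L subgroup_S _ k _ _ cc yc yc fix_S
    by (rule mem_subgroup_if_coset_tuple_eq) (use S_H H_L yK k K_L in auto)
  moreover have "coset_tuple G H k (\<lambda>i. y i \<otimes> c) = coset_tuple G H k y"
    using subgroup_S subgroup_H S_H _ yc fix_S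
    by (rule coset_tuple_eq_mono) (use yc cc in auto)
  ultimately have "c \<in> tuple_stab (G\<lparr>carrier := L\<rparr>) k (coset_tuple G H k y)"
    using subgroup.subset[OF subgroup_H] yc cc
    by (simp add: tuple_stab_carrier_update tuple_act_coset_tuple)
  then show "c \<in> {\<one>}" using y_stab core_trivial by blast
qed

lemma regular_orbits_Gs:
  assumes k: "0 < k"
  shows "(\<lambda>y. tuple_orbit (G\<lparr>carrier := Gs\<rparr>) k (coset_tuple G S k y)) ` regular_reps k
    \<subseteq> regular_orbits (G\<lparr>carrier := Gs\<rparr>) S k"
proof
  fix Orb assume "Orb \<in> (\<lambda>y. tuple_orbit (G\<lparr>carrier := Gs\<rparr>) k (coset_tuple G S k y)) ` regular_reps k"
  then obtain y where y: "y \<in> regular_reps k"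
    and Orb: "Orb = tuple_orbit (G\<lparr>carrier := Gs\<rparr>) k (coset_tuple G S k y)" by blast
  have yK: "\<forall>i<k. y i \<in> K" using y unfolding regular_reps_def by auto
  have "tuple_stab (G\<lparr>carrier := Gs\<rparr>) k (coset_tuple G S k y) \<subseteq> core (G\<lparr>carrier := Gs\<rparr>) S"
    using tuple_stab_Gs_trivial[OF k y] subgroup.one_closed[OF core_subgroup[OF subgroup_Gs subgroup_S S_Gs]]
    by blast
  moreover have "core (G\<lparr>carrier := Gs\<rparr>) S \<subseteq> tuple_stab (G\<lparr>carrier := Gs\<rparr>) k (coset_tuple G S k y)"
    using yK K_Gs by (intro core_subset_tuple_stab subgroup_Gs subgroup_S S_Gs) auto
  moreover have "coset_tuple G S k y \<in> tuples (G\<lparr>carrier := Gs\<rparr>) S k"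
    using yK K_Gs unfolding tuples_carrier_update by blast
  ultimately show "Orb \<in> regular_orbits (G\<lparr>carrier := Gs\<rparr>) S k"
    unfolding regular_orbits_def Orb by blast
qed

lemma tuple_orbit_L_eq_if_tuple_orbit_Gs_eq:
  assumes k: "0 < k" and y: "y \<in> {..<k} \<rightarrow> K" and z: "z \<in> {..<k} \<rightarrow> K"
    and eq: "tuple_orbit (G\<lparr>carrier := Gs\<rparr>) k (coset_tuple G S k y)
      = tuple_orbit (G\<lparr>carrier := Gs\<rparr>) k (coset_tuple G S k z)"
  shows "tuple_orbit (G\<lparr>carrier := L\<rparr>) k (coset_tuple G H k y)
    = tuple_orbit (G\<lparr>carrier := L\<rparr>) k (coset_tuple G H k z)"
proof -
  have yc: "\<forall>i<k. y i \<in> carrier G" and zc: "\<forall>i<k. z i \<in> carrier G"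
    using y z K_carrier by auto
  have Sc: "S \<subseteq> carrier G" and Hc: "H \<subseteq> carrier G"
    using subgroup.subset subgroup_S subgroup_H by auto
  have "coset_tuple G S k (\<lambda>i. y i \<otimes> \<one>) = coset_tuple G S k y"
    using yc by (intro coset_tuple_cong) simp
  then have "tuple_act G k (coset_tuple G S k y) \<one> = coset_tuple G S k y"
    using Sc yc by (simp add: tuple_act_coset_tuple)
  then have "coset_tuple G S k y \<in> tuple_orbit (G\<lparr>carrier := Gs\<rparr>) k (coset_tuple G S k y)"
    using subgroup.one_closed[OF subgroup_Gs] unfolding tuple_orbit_carrier_update by force
  then obtain x where x: "x \<in> Gs" and fix_S: "coset_tuple G S k (\<lambda>i. z i \<otimes> x) = coset_tuple G S k y"
    using eq Sc zc subgroup.mem_carrier[OF subgroup_Gs]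
    by (auto simp: tuple_orbit_carrier_update tuple_act_coset_tuple)
  have xc: "x \<in> carrier G" using x subgroup.mem_carrier[OF subgroup_Gs] by blast
  have "x \<in> L"
    using subgroup_L subgroup_S _ k _ _ xc zc yc fix_S
    by (rule mem_subgroup_if_coset_tuple_eq) (use S_H H_L y z k K_L in auto)
  moreover have "coset_tuple G H k (\<lambda>i. z i \<otimes> x) = coset_tuple G H k y"
    using subgroup_S subgroup_H S_H _ yc fix_S
    by (rule coset_tuple_eq_mono) (use zc xc in auto)
  ultimately show ?thesis
    using tuple_orbit_coset_tuple_shift[OF subgroup_L Hc zc] unfolding tuple_orbit_carrier_update
    by metis
qed

theorem Reg_le_Reg:
  assumes fin: "finite (carrier G)" and k: "0 < k"
  shows "Reg (G\<lparr>carrier := L\<rparr>) H k \<le> Reg (G\<lparr>carrier := Gs\<rparr>) S k"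
proof -
  let ?orbit_L = "\<lambda>y. tuple_orbit (G\<lparr>carrier := L\<rparr>) k (coset_tuple G H k y)"
  let ?orbit_Gs = "\<lambda>y. tuple_orbit (G\<lparr>carrier := Gs\<rparr>) k (coset_tuple G S k y)"
  have "finite (tuples (G\<lparr>carrier := Gs\<rparr>) S k)"
    using fin subgroup.subset[OF subgroup_Gs] by (intro finite_tuples) (rule finite_subset)
  then have fin_regular: "finite (regular_orbits (G\<lparr>carrier := Gs\<rparr>) S k)"
    unfolding regular_orbits_def by (rule finite_subset[rotated, OF finite_imageI]) blast
  have "card (?orbit_L ` regular_reps k) \<le> card (?orbit_Gs ` regular_reps k)"
    using finite_subset[OF regular_orbits_Gs[OF k] fin_regular]
    by (rule card_image_le_card_image)
      (use tuple_orbit_L_eq_if_tuple_orbit_Gs_eq[OF k] in \<open>auto simp: regular_reps_def\<close>)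
  also have "\<dots> \<le> card (regular_orbits (G\<lparr>carrier := Gs\<rparr>) S k)"
    by (rule card_mono[OF fin_regular regular_orbits_Gs[OF k]])
  finally show ?thesis
    by (simp add: Reg_eq_card_regular_orbits regular_orbits_L)
qed

end

lemma (in simple_group) regular_orbit_comparison_AutoGroup:
  assumes nc: "\<not> comm_group G"
    and Gs: "subgroup Gs (AutoGroup G)" and Inn_Gs: "Inn G \<subseteq> Gs"
    and S: "solvable_subgroup ((AutoGroup G)\<lparr>carrier := Gs\<rparr>) S"
    and H: "solvable_subgroup (AutoGroup G) H" and S_H: "S \<subseteq> H"
  shows "regular_orbit_comparison (AutoGroup G) Gs (generate (AutoGroup G) (H \<union> Inn G)) S H (Inn G)"
proof -
  interpret A: group "AutoGroup G" by (rule AutoGroup)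
  define L where "L = generate (AutoGroup G) (H \<union> Inn G)"
  have H_sub: "subgroup H (AutoGroup G)" and H_sol: "solvable ((AutoGroup G)\<lparr>carrier := H\<rparr>)"
    using H unfolding solvable_subgroup_def by auto
  have S_sub: "subgroup S (AutoGroup G)" and S_Gs: "S \<subseteq> Gs"
    using A.solvable_subgroup_of_carrier_update[OF Gs S] S subgroup.subset
    unfolding solvable_subgroup_def by force+
  have Inn_normal: "Inn G \<lhd> AutoGroup G" by (rule Inn_normal_AutoGroup)
  have L_sub: "subgroup L (AutoGroup G)"
    unfolding L_def using subgroup.subset[OF H_sub] normal_imp_subgroup[OF Inn_normal]
    by (intro A.generate_is_subgroup) (auto dest: subgroup.subset)
  have H_L: "H \<subseteq> L" and Inn_L: "Inn G \<subseteq> L"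
    unfolding L_def by (auto intro: generate.incl)
  have L_factor: "L \<subseteq> H <#>\<^bsub>AutoGroup G\<^esub> Inn G"
    unfolding L_def using H_sub Inn_normal by (rule A.generate_Un_normal_subset_set_mult)
  have "core ((AutoGroup G)\<lparr>carrier := L\<rparr>) H = {\<one>\<^bsub>AutoGroup G\<^esub>}"
    using nc L_sub Inn_L H_sub H_L H_sol by (rule core_of_solvable_subgroup_trivial)
  then show ?thesis
    unfolding L_def[symmetric]
    by (intro regular_orbit_comparison.intro regular_orbit_comparison_axioms.intro A.is_group
        Gs L_sub S_sub H_sub S_H H_L S_Gs Inn_Gs Inn_L L_factor)
qed

theorem mainTheorem8:
  fixes G0 :: "('a, 'b) monoid_scheme"
  assumes "simple_group G0"
    and "finite (carrier G0)"
    and "\<not> comm_group G0"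
    and "\<And>H. maximal_solvable_subgroup (AutoGroup G0) H \<Longrightarrow>
           Reg ((AutoGroup G0)\<lparr>carrier := generate (AutoGroup G0) (H \<union> Inn G0)\<rparr>) H 5 \<ge> 5"
    and "subgroup G (AutoGroup G0)"
    and "Inn G0 \<subseteq> G"
    and "solvable_subgroup ((AutoGroup G0)\<lparr>carrier := G\<rparr>) S"
  shows "Reg ((AutoGroup G0)\<lparr>carrier := G\<rparr>) S 5 \<ge> 5"
proof -
  interpret G0: simple_group G0 by (rule assms(1))
  interpret A: group "AutoGroup G0" by (rule G0.AutoGroup)
  have fin: "finite (carrier (AutoGroup G0))" using assms(2) by (rule G0.finite_AutoGroup)
  obtain H where H: "maximal_solvable_subgroup (AutoGroup G0) H" and S_H: "S \<subseteq> H"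
    using A.ex_maximal_solvable_subgroup[OF fin A.solvable_subgroup_of_carrier_update[OF assms(5,7)]] .
  interpret regular_orbit_comparison "AutoGroup G0" G "generate (AutoGroup G0) (H \<union> Inn G0)" S H "Inn G0"
    using H unfolding maximal_solvable_subgroup_def
    by (intro G0.regular_orbit_comparison_AutoGroup assms(3,5,6,7) S_H) blast
  have "5 \<le> Reg ((AutoGroup G0)\<lparr>carrier := generate (AutoGroup G0) (H \<union> Inn G0)\<rparr>) H 5"
    by (rule assms(4)[OF H])
  also have "\<dots> \<le> Reg ((AutoGroup G0)\<lparr>carrier := G\<rparr>) S 5"
    using fin by (rule Reg_le_Reg) simp
  finally show ?thesis .
qed

end
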